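(* Suppose the kernel $k$ satisfies $\int_\mathcal{G}k(gx,x')\,d\lambda(g)=\int_\mathcal{G}k(x,gx')\,d\lambda(g)$ for all $x,x'\in\mathcal{X}$. Let $\overline{\mathcal{H}}=\{f\in\mathcal{H}:f\text{ is }\mathcal{G}\text{-invariant}\}$ and $\mathcal{H}_\perp=\{f\in\mathcal{H}:\mathcal{O}f=0\}$, where $\mathcal{O}f(x)=\int_\mathcal{G}f(gx)\,d\lambda(g)$. Then $\mathcal{O}$ maps $\mathcal{H}$ into $\mathcal{H}$, and: - $\mathcal{H}$ admits the orthogonal decomposition $\mathcal{H}=\overline{\mathcal{H}}\oplus\mathcal{H}_\perp$ (orthogonality with respect to $\langle\cdot,\cdot\rangle_\mathcal{H}$); - $\overline{\mathcal{H}}$ is an RKHS with kernel $\bar k(x,y)=\int_\mathcal{G}k(x,gy)\,d\lambda(g)$; - $\mathcal{H}_\perp$ is an RKHS with kernel $k^\perp(x,y)=k(x,y)-\bar k(x,y)$.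
   Context: $\mathcal{G}$ is a compact, second countable, Hausdorff topological group with Haar probability measure $\lambda$, acting measurably on a nonempty Polish space $\mathcal{X}$; $\mu$ is a $\mathcal{G}$-invariant Borel probability measure on $\mathcal{X}$ with $\mathrm{supp}\,\mu=\mathcal{X}$. $k:\mathcal{X}\times\mathcal{X}\to\mathbb{R}$ is a measurable symmetric positive definite kernel with RKHS $\mathcal{H}$ (inner product $\langle\cdot,\cdot\rangle_\mathcal{H}$), such that $k(\cdot,x)$ is continuous for all $x$ and $\sup_xk(x,x)<\infty$. $f$ is $\mathcal{G}$-invariant if $f(gx)=f(x)$ for all $g,x$. *)

theory Defs
  imports "HOL-Probability.Probability"
begin

text \<open>The group \<G> is the whole type 'g, with operations gmul, gone, ginv.
  A topological group: group axioms plus continuity of multiplication and inversion.\<close>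
definition topological_group ::
  "('g::topological_space \<Rightarrow> 'g \<Rightarrow> 'g) \<Rightarrow> 'g \<Rightarrow> ('g \<Rightarrow> 'g) \<Rightarrow> bool" where
  "topological_group gmul gone ginv \<longleftrightarrow>
     (\<forall>a b c. gmul (gmul a b) c = gmul a (gmul b c)) \<and>
     (\<forall>a. gmul gone a = a \<and> gmul a gone = a) \<and>
     (\<forall>a. gmul (ginv a) a = gone \<and> gmul a (ginv a) = gone) \<and>
     continuous_on UNIV (\<lambda>(a, b). gmul a b) \<and>
     continuous_on UNIV ginv"

definition haar_probability ::
  "('g::topological_space \<Rightarrow> 'g \<Rightarrow> 'g) \<Rightarrow> 'g measure \<Rightarrow> bool" where
  "haar_probability gmul L \<longleftrightarrow>
     prob_space L \<and> sets L = sets borel \<and>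
     (\<forall>g A. A \<in> sets borel \<longrightarrow> emeasure L ((\<lambda>h. gmul g h) ` A) = emeasure L A)"

definition measurable_action ::
  "('g::topological_space \<Rightarrow> 'g \<Rightarrow> 'g) \<Rightarrow> 'g \<Rightarrow> ('g \<Rightarrow> 'x::topological_space \<Rightarrow> 'x) \<Rightarrow> bool" where
  "measurable_action gmul gone act \<longleftrightarrow>
     (\<forall>x. act gone x = x) \<and>
     (\<forall>g h x. act (gmul g h) x = act g (act h x)) \<and>
     (\<lambda>(g, x). act g x) \<in> measurable (borel \<Otimes>\<^sub>M borel) borel"

definition support :: "'x::topological_space measure \<Rightarrow> 'x set" where
  "support M = {x. \<forall>U. open U \<and> x \<in> U \<longrightarrow> emeasure M U > 0}"

definition G_invariant :: "('g \<Rightarrow> 'x \<Rightarrow> 'x) \<Rightarrow> ('x \<Rightarrow> real) \<Rightarrow> bool" where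
  "G_invariant act f \<longleftrightarrow> (\<forall>g x. f (act g x) = f x)"

definition orbit_avg :: "'g measure \<Rightarrow> ('g \<Rightarrow> 'x \<Rightarrow> 'x) \<Rightarrow> ('x \<Rightarrow> real) \<Rightarrow> 'x \<Rightarrow> real" where
  "orbit_avg L act f x = (\<integral>g. f (act g x) \<partial>L)"

definition pd_kernel :: "('x \<Rightarrow> 'x \<Rightarrow> real) \<Rightarrow> bool" where
  "pd_kernel K \<longleftrightarrow> (\<forall>x y. K x y = K y x) \<and>
     (\<forall>n (c :: nat \<Rightarrow> real) (xs :: nat \<Rightarrow> 'x).
        (\<Sum>i<n. \<Sum>j<n. c i * c j * K (xs i) (xs j)) \<ge> 0)"

definition is_rkhs ::
  "('x \<Rightarrow> real) set \<Rightarrow> (('x \<Rightarrow> real) \<Rightarrow> ('x \<Rightarrow> real) \<Rightarrow> real) \<Rightarrow> ('x \<Rightarrow> 'x \<Rightarrow> real) \<Rightarrow> bool" where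
  "is_rkhs H ip K \<longleftrightarrow>
     \<comment> \<open>linear subspace of the function space\<close>
     (\<lambda>_. 0) \<in> H \<and>
     (\<forall>f\<in>H. \<forall>h\<in>H. (\<lambda>x. f x + h x) \<in> H) \<and>
     (\<forall>f\<in>H. \<forall>c::real. (\<lambda>x. c * f x) \<in> H) \<and>
     \<comment> \<open>inner product\<close>
     (\<forall>f\<in>H. \<forall>h\<in>H. ip f h = ip h f) \<and>
     (\<forall>f\<in>H. \<forall>f'\<in>H. \<forall>h\<in>H. ip (\<lambda>x. f x + f' x) h = ip f h + ip f' h) \<and>
     (\<forall>f\<in>H. \<forall>h\<in>H. \<forall>c::real. ip (\<lambda>x. c * f x) h = c * ip f h) \<and>
     (\<forall>f\<in>H. ip f f \<ge> 0) \<and>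
     (\<forall>f\<in>H. ip f f = 0 \<longrightarrow> f = (\<lambda>_. 0)) \<and>
     \<comment> \<open>completeness w.r.t. the induced norm\<close>
     (\<forall>s :: nat \<Rightarrow> 'x \<Rightarrow> real. (\<forall>n. s n \<in> H) \<longrightarrow>
        (\<forall>e>0. \<exists>N. \<forall>m\<ge>N. \<forall>n\<ge>N. ip (\<lambda>x. s m x - s n x) (\<lambda>x. s m x - s n x) < e) \<longrightarrow>
        (\<exists>f\<in>H. (\<lambda>n. ip (\<lambda>x. s n x - f x) (\<lambda>x. s n x - f x)) \<longlonglongrightarrow> 0)) \<and>
     \<comment> \<open>reproducing kernel\<close>
     (\<forall>y. (\<lambda>x. K x y) \<in> H) \<and>
     (\<forall>f\<in>H. \<forall>y. f y = ip f (\<lambda>x. K x y))"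

end

theory Submission
  imports Defs
begin

(* Since k is bounded on the diagonal, |f x| <= sqrt (sup k) * ||f|| on H, so for fixed y the
   functional f |-> (O f)(y) is bounded. By the Riesz representation theorem (proved by
   minimising the energy ||s||^2/2 - psi s over a closed subspace) it is represented by some element
   of H, and the reproducing property identifies that element as kbar(-, y); thus
   (O f)(y) = <f, kbar(-, y)>. The symmetry hypothesis on k makes kbar symmetric, and right
   invariance of the Haar measure (a consequence of left invariance, by Fubini) then makes each
   kbar(-, y) invariant. So kbar is a reproducing kernel of the closed subspace Hbar of invariant
   functions, O is the orthogonal projection onto Hbar, Hperp is the orthogonal complement of Hbar,
   and k - kbar reproduces on it. *)

section \<open>Reproducing kernel Hilbert spaces and their closed subspaces\<close>

lemma quadratic_nonneg_imp_linear_zero: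
  fixes a b :: real
  assumes "\<And>t. 0 \<le> t * a + t\<^sup>2 * b"
  shows "a = 0"
proof (rule ccontr)
  assume "a \<noteq> 0"
  define B where "B = \<bar>b\<bar> + 1"
  have "B > 0" "b - B < 0" unfolding B_def by auto
  define t where "t = - a / B"
  have "t * a + t\<^sup>2 * b = a\<^sup>2 / B\<^sup>2 * (b - B)"
    unfolding t_def using \<open>B > 0\<close> by (simp add: field_simps power2_eq_square)
  also have "\<dots> < 0"
    using \<open>a \<noteq> 0\<close> \<open>B > 0\<close> \<open>b - B < 0\<close> by (intro mult_pos_neg) auto
  finally show False using assms[of t] by simp
qed

locale rkhs =
  fixes H :: "('x \<Rightarrow> real) set"
    and ip :: "('x \<Rightarrow> real) \<Rightarrow> ('x \<Rightarrow> real) \<Rightarrow> real"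
    and K :: "'x \<Rightarrow> 'x \<Rightarrow> real"
  assumes is_rkhs: "is_rkhs H ip K"
begin

abbreviation sqdist :: "('x \<Rightarrow> real) \<Rightarrow> ('x \<Rightarrow> real) \<Rightarrow> real" where
  "sqdist f h \<equiv> ip (\<lambda>x. f x - h x) (\<lambda>x. f x - h x)"

abbreviation hnorm :: "('x \<Rightarrow> real) \<Rightarrow> real" where
  "hnorm f \<equiv> sqrt (ip f f)"

lemma zero_mem: "(\<lambda>_. 0) \<in> H"
  using is_rkhs unfolding is_rkhs_def by blast

lemma add_mem: "f \<in> H \<Longrightarrow> h \<in> H \<Longrightarrow> (\<lambda>x. f x + h x) \<in> H"
  using is_rkhs unfolding is_rkhs_def by blast

lemma scale_mem: "f \<in> H \<Longrightarrow> (\<lambda>x. c * f x) \<in> H"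
  using is_rkhs unfolding is_rkhs_def by blast

lemma inner_commute: "f \<in> H \<Longrightarrow> h \<in> H \<Longrightarrow> ip f h = ip h f"
  using is_rkhs unfolding is_rkhs_def by blast

lemma inner_add_left:
  "f \<in> H \<Longrightarrow> f' \<in> H \<Longrightarrow> h \<in> H \<Longrightarrow> ip (\<lambda>x. f x + f' x) h = ip f h + ip f' h"
  using is_rkhs unfolding is_rkhs_def by blast

lemma inner_scale_left: "f \<in> H \<Longrightarrow> h \<in> H \<Longrightarrow> ip (\<lambda>x. c * f x) h = c * ip f h"
  using is_rkhs unfolding is_rkhs_def by blast

lemma inner_ge_zero: "f \<in> H \<Longrightarrow> ip f f \<ge> 0"
  using is_rkhs unfolding is_rkhs_def by blast

lemma inner_self_eq_zero: "f \<in> H \<Longrightarrow> ip f f = 0 \<Longrightarrow> f = (\<lambda>_. 0)"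
  using is_rkhs unfolding is_rkhs_def by blast

lemma complete:
  "(\<And>n. s n \<in> H) \<Longrightarrow> (\<forall>e>0. \<exists>N. \<forall>m\<ge>N. \<forall>n\<ge>N. sqdist (s m) (s n) < e) \<Longrightarrow>
    \<exists>f\<in>H. (\<lambda>n. sqdist (s n) f) \<longlonglongrightarrow> 0"
  using is_rkhs unfolding is_rkhs_def by blast

lemma kernel_mem: "(\<lambda>x. K x y) \<in> H"
  using is_rkhs unfolding is_rkhs_def by blast

lemma reproducing: "f \<in> H \<Longrightarrow> f y = ip f (\<lambda>x. K x y)"
  using is_rkhs unfolding is_rkhs_def by blast

lemma diff_mem: "f \<in> H \<Longrightarrow> h \<in> H \<Longrightarrow> (\<lambda>x. f x - h x) \<in> H"
  using add_mem[of f "\<lambda>x. (-1) * h x"] scale_mem[of h "-1"] by simp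

lemma inner_add_right:
  "f \<in> H \<Longrightarrow> f' \<in> H \<Longrightarrow> h \<in> H \<Longrightarrow> ip h (\<lambda>x. f x + f' x) = ip h f + ip h f'"
  using inner_add_left[of f f' h] inner_commute[of h] add_mem[of f f'] by simp

lemma inner_scale_right: "f \<in> H \<Longrightarrow> h \<in> H \<Longrightarrow> ip h (\<lambda>x. c * f x) = c * ip h f"
  using inner_scale_left[of f h c] inner_commute[of h] scale_mem[of f c] by simp

lemma inner_diff_left:
  "f \<in> H \<Longrightarrow> f' \<in> H \<Longrightarrow> h \<in> H \<Longrightarrow> ip (\<lambda>x. f x - f' x) h = ip f h - ip f' h"
  using inner_add_left[of f "\<lambda>x. (-1) * f' x" h] inner_scale_left[of f' h "-1"]
    scale_mem[of f' "-1"]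
  by simp

lemma inner_diff_right:
  "f \<in> H \<Longrightarrow> f' \<in> H \<Longrightarrow> h \<in> H \<Longrightarrow> ip h (\<lambda>x. f x - f' x) = ip h f - ip h f'"
  using inner_diff_left[of f f' h] inner_commute[of h] diff_mem[of f f'] by simp

lemma inner_zero_left: "h \<in> H \<Longrightarrow> ip (\<lambda>_. 0) h = 0"
  using inner_scale_left[of "\<lambda>_. 0" h 0] zero_mem by simp

lemma inner_zero_right: "h \<in> H \<Longrightarrow> ip h (\<lambda>_. 0) = 0"
  using inner_zero_left inner_commute zero_mem by metis

lemma kernel_sym: "K x y = K y x"
  using reproducing[OF kernel_mem, of x y] reproducing[OF kernel_mem, of y x]
    inner_commute[OF kernel_mem kernel_mem, of y x] by simp

lemma inner_add_scale_self:
  assumes f: "f \<in> H" and h: "h \<in> H"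
  shows "ip (\<lambda>x. f x + t * h x) (\<lambda>x. f x + t * h x) = ip f f + 2 * t * ip f h + t\<^sup>2 * ip h h"
  using f h by (simp add: inner_add_left inner_add_right inner_scale_left inner_scale_right
      add_mem scale_mem inner_commute[of h f] power2_eq_square algebra_simps)

lemma Cauchy_Schwarz:
  assumes f: "f \<in> H" and h: "h \<in> H"
  shows "(ip f h)\<^sup>2 \<le> ip f f * ip h h"
proof (cases "ip h h = 0")
  case True
  then show ?thesis
    using inner_self_eq_zero[OF h] inner_zero_right[OF f] inner_ge_zero[OF f] by simp
next
  case False
  then have hpos: "ip h h > 0" using inner_ge_zero[OF h] by linarith
  define t where "t = - ip f h / ip h h"
  have "0 \<le> ip (\<lambda>x. f x + t * h x) (\<lambda>x. f x + t * h x)"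
    using inner_ge_zero add_mem scale_mem f h by blast
  also have "\<dots> = ip f f + 2 * t * ip f h + t\<^sup>2 * ip h h"
    using inner_add_scale_self[OF f h] .
  also have "\<dots> = ip f f - (ip f h)\<^sup>2 / ip h h"
    using hpos unfolding t_def by (simp add: field_simps power2_eq_square)
  finally show ?thesis using hpos by (simp add: field_simps)
qed

lemma abs_inner_le: "f \<in> H \<Longrightarrow> h \<in> H \<Longrightarrow> \<bar>ip f h\<bar> \<le> hnorm f * hnorm h"
  using Cauchy_Schwarz[of f h] inner_ge_zero
  by (metis real_sqrt_abs real_sqrt_le_mono real_sqrt_mult)

lemma abs_le_hnorm: "f \<in> H \<Longrightarrow> \<bar>f y\<bar> \<le> hnorm f * sqrt (K y y)"
  using abs_inner_le[OF _ kernel_mem, of f y] reproducing[of f y] reproducing[OF kernel_mem, of y y]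
  by simp

lemma abs_le_hnorm_bound:
  assumes B: "\<And>x. K x x \<le> B" and f: "f \<in> H"
  shows "\<bar>f x\<bar> \<le> hnorm f * sqrt B"
proof -
  have "hnorm f * sqrt (K x x) \<le> hnorm f * sqrt B"
    using B[of x] inner_ge_zero[OF f] by (intro mult_left_mono) simp_all
  then show ?thesis using abs_le_hnorm[OF f, of x] by linarith
qed

lemma tendsto_hnorm_diff:
  "(\<lambda>n. sqdist (s n) f) \<longlonglongrightarrow> 0 \<Longrightarrow> (\<lambda>n. hnorm (\<lambda>x. s n x - f x)) \<longlonglongrightarrow> 0"
  using tendsto_real_sqrt[of "\<lambda>n. sqdist (s n) f" 0] by simp

lemma tendsto_inner_right:
  assumes h: "h \<in> H" and s: "\<And>n. s n \<in> H" and f: "f \<in> H"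
    and lim: "(\<lambda>n. sqdist (s n) f) \<longlonglongrightarrow> 0"
  shows "(\<lambda>n. ip h (s n)) \<longlonglongrightarrow> ip h f"
proof -
  have "(\<lambda>n. ip h (s n) - ip h f) \<longlonglongrightarrow> 0"
  proof (rule Lim_null_comparison)
    show "\<forall>\<^sub>F n in sequentially. norm (ip h (s n) - ip h f) \<le> hnorm h * hnorm (\<lambda>x. s n x - f x)"
      using abs_inner_le[OF h diff_mem[OF s f]] by (simp add: inner_diff_right h s f)
    show "(\<lambda>n. hnorm h * hnorm (\<lambda>x. s n x - f x)) \<longlonglongrightarrow> 0"
      using tendsto_mult_right_zero[OF tendsto_hnorm_diff[OF lim]] .
  qed
  then show ?thesis by (simp add: LIM_zero_iff)
qed

lemma tendsto_inner_self:
  assumes s: "\<And>n. s n \<in> H" and f: "f \<in> H" and lim: "(\<lambda>n. sqdist (s n) f) \<longlonglongrightarrow> 0"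
  shows "(\<lambda>n. ip (s n) (s n)) \<longlonglongrightarrow> ip f f"
proof -
  have "ip (s n) (s n) = sqdist (s n) f + 2 * ip f (s n) - ip f f" for n
  proof -
    have "sqdist (s n) f = ip (s n) (s n) - ip (s n) f - ip f (s n) + ip f f"
      using s f by (simp add: inner_diff_left inner_diff_right diff_mem)
    then show ?thesis using inner_commute[OF f s, of n] by simp
  qed
  moreover have "(\<lambda>n. sqdist (s n) f + 2 * ip f (s n) - ip f f) \<longlonglongrightarrow> 0 + 2 * ip f f - ip f f"
    by (intro tendsto_intros lim tendsto_inner_right[OF f s f lim])
  ultimately show ?thesis by simp
qed

lemma tendsto_pointwise:
  assumes s: "\<And>n. s n \<in> H" and f: "f \<in> H" and lim: "(\<lambda>n. sqdist (s n) f) \<longlonglongrightarrow> 0"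
  shows "(\<lambda>n. s n y) \<longlonglongrightarrow> f y"
proof -
  have "ip (\<lambda>x. K x y) h = h y" if "h \<in> H" for h
    using reproducing[OF that, of y] inner_commute[OF that kernel_mem] by simp
  then show ?thesis
    using tendsto_inner_right[OF kernel_mem s f lim, of y] s f by simp
qed

definition closed_subspace :: "('x \<Rightarrow> real) set \<Rightarrow> bool" where
  "closed_subspace S \<longleftrightarrow> S \<subseteq> H \<and> (\<lambda>_. 0) \<in> S \<and>
     (\<forall>f\<in>S. \<forall>h\<in>S. (\<lambda>x. f x + h x) \<in> S) \<and> (\<forall>f\<in>S. \<forall>c. (\<lambda>x. c * f x) \<in> S) \<and>
     (\<forall>s f. (\<forall>n. s n \<in> S) \<longrightarrow> f \<in> H \<longrightarrow> (\<lambda>n. sqdist (s n) f) \<longlonglongrightarrow> 0 \<longrightarrow> f \<in> S)"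

lemma closed_subspaceI:
  assumes "S \<subseteq> H" "(\<lambda>_. 0) \<in> S"
    and "\<And>f h. f \<in> S \<Longrightarrow> h \<in> S \<Longrightarrow> (\<lambda>x. f x + h x) \<in> S"
    and "\<And>f c. f \<in> S \<Longrightarrow> (\<lambda>x. c * f x) \<in> S"
    and "\<And>s f. (\<And>n. s n \<in> S) \<Longrightarrow> f \<in> H \<Longrightarrow> (\<lambda>n. sqdist (s n) f) \<longlonglongrightarrow> 0 \<Longrightarrow> f \<in> S"
  shows "closed_subspace S"
  using assms unfolding closed_subspace_def by blast

lemma
  assumes "closed_subspace S"
  shows closed_subspace_subset: "f \<in> S \<Longrightarrow> f \<in> H"
    and closed_subspace_zero: "(\<lambda>_. 0) \<in> S"
    and closed_subspace_add: "f \<in> S \<Longrightarrow> h \<in> S \<Longrightarrow> (\<lambda>x. f x + h x) \<in> S"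
    and closed_subspace_scale: "f \<in> S \<Longrightarrow> (\<lambda>x. c * f x) \<in> S"
    and closed_subspace_limit:
      "(\<And>n. s n \<in> S) \<Longrightarrow> f \<in> H \<Longrightarrow> (\<lambda>n. sqdist (s n) f) \<longlonglongrightarrow> 0 \<Longrightarrow> f \<in> S"
  using assms unfolding closed_subspace_def by blast+

lemma closed_subspace_diff:
  "closed_subspace S \<Longrightarrow> f \<in> S \<Longrightarrow> h \<in> S \<Longrightarrow> (\<lambda>x. f x - h x) \<in> S"
  using closed_subspace_add[of S f "\<lambda>x. (-1) * h x"] closed_subspace_scale[of S h "-1"] by simp

lemma closed_subspace_H: "closed_subspace H"
  by (rule closed_subspaceI) (simp_all add: zero_mem add_mem scale_mem)

lemma parallelogram:
  assumes f: "f \<in> H" and h: "h \<in> H"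
  shows "sqdist f h + ip (\<lambda>x. f x + h x) (\<lambda>x. f x + h x) = 2 * ip f f + 2 * ip h h"
  using f h inner_commute[OF f h]
  by (simp add: inner_diff_left inner_diff_right inner_add_left inner_add_right diff_mem add_mem)

context
  fixes S :: "('x \<Rightarrow> real) set" and psi :: "('x \<Rightarrow> real) \<Rightarrow> real" and C :: real
  assumes S: "closed_subspace S"
    and psi_add: "\<And>f h. f \<in> S \<Longrightarrow> h \<in> S \<Longrightarrow> psi (\<lambda>x. f x + h x) = psi f + psi h"
    and psi_scale: "\<And>f c. f \<in> S \<Longrightarrow> psi (\<lambda>x. c * f x) = c * psi f"
    and psi_bound: "\<And>f. f \<in> S \<Longrightarrow> \<bar>psi f\<bar> \<le> C * hnorm f"
begin

abbreviation energy :: "('x \<Rightarrow> real) \<Rightarrow> real" where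
  "energy s \<equiv> ip s s / 2 - psi s"

lemma psi_diff: "f \<in> S \<Longrightarrow> h \<in> S \<Longrightarrow> psi (\<lambda>x. f x - h x) = psi f - psi h"
  using psi_add[of f "\<lambda>x. (-1) * h x"] psi_scale[of h "-1"] closed_subspace_scale[OF S, of h "-1"]
  by simp

lemma energy_lower_bound:
  assumes s: "s \<in> S"
  shows "- C\<^sup>2 / 2 \<le> energy s"
proof -
  have sH: "s \<in> H" using closed_subspace_subset[OF S s] .
  have "\<bar>psi s\<bar> \<le> \<bar>C\<bar> * hnorm s"
    using psi_bound[OF s] inner_ge_zero[OF sH]
    by (meson abs_ge_self dual_order.trans mult_right_mono real_sqrt_ge_zero)
  moreover have "(hnorm s - \<bar>C\<bar>)\<^sup>2 \<ge> 0" by simp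
  ultimately show ?thesis
    using inner_ge_zero[OF sH] by (simp add: power2_eq_square algebra_simps)
qed

text \<open>Parallelogram law for \<open>a\<close> and \<open>b\<close>, using that their midpoint has energy at least \<open>m\<close>.\<close>
lemma sqdist_le_energy:
  assumes a: "a \<in> S" and b: "b \<in> S" and m: "\<And>s. s \<in> S \<Longrightarrow> m \<le> energy s"
  shows "sqdist a b \<le> 4 * (energy a - m) + 4 * (energy b - m)"
proof -
  define c where "c = (\<lambda>x. (1/2) * (a x + b x))"
  have aH: "a \<in> H" and bH: "b \<in> H" using closed_subspace_subset[OF S] a b by auto
  have abS: "(\<lambda>x. a x + b x) \<in> S" using closed_subspace_add[OF S a b] .
  have abH: "(\<lambda>x. a x + b x) \<in> H" using add_mem[OF aH bH] .
  have cS: "c \<in> S" unfolding c_def using closed_subspace_scale[OF S abS] .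
  have "ip c c = (1/2) * ip (\<lambda>x. a x + b x) c"
    unfolding c_def by (rule inner_scale_left[OF abH scale_mem[OF abH]])
  also have "ip (\<lambda>x. a x + b x) c = (1/2) * ip (\<lambda>x. a x + b x) (\<lambda>x. a x + b x)"
    unfolding c_def by (rule inner_scale_right[OF abH abH])
  finally have "ip c c = ip (\<lambda>x. a x + b x) (\<lambda>x. a x + b x) / 4" by simp
  moreover have "psi c = (1/2) * psi (\<lambda>x. a x + b x)"
    unfolding c_def by (rule psi_scale[OF abS])
  ultimately show ?thesis
    using m[OF cS] parallelogram[OF aH bH] psi_add[OF a b] by simp
qed

lemma tendsto_psi:
  assumes s: "\<And>n. s n \<in> S" and f: "f \<in> S" and lim: "(\<lambda>n. sqdist (s n) f) \<longlonglongrightarrow> 0"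
  shows "(\<lambda>n. psi (s n)) \<longlonglongrightarrow> psi f"
proof -
  have "(\<lambda>n. psi (s n) - psi f) \<longlonglongrightarrow> 0"
  proof (rule Lim_null_comparison)
    show "\<forall>\<^sub>F n in sequentially. norm (psi (s n) - psi f) \<le> C * hnorm (\<lambda>x. s n x - f x)"
      using psi_bound[OF closed_subspace_diff[OF S s f]] psi_diff[OF s f] by simp
    show "(\<lambda>n. C * hnorm (\<lambda>x. s n x - f x)) \<longlonglongrightarrow> 0"
      using tendsto_mult_right_zero[OF tendsto_hnorm_diff[OF lim]] .
  qed
  then show ?thesis by (simp add: LIM_zero_iff)
qed

lemma tendsto_energy:
  assumes s: "\<And>n. s n \<in> S" and f: "f \<in> S" and lim: "(\<lambda>n. sqdist (s n) f) \<longlonglongrightarrow> 0"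
  shows "(\<lambda>n. energy (s n)) \<longlonglongrightarrow> energy f"
proof -
  have sH: "\<And>n. s n \<in> H" and fH: "f \<in> H" using closed_subspace_subset[OF S] s f by auto
  have "(\<lambda>n. ip (s n) (s n) / 2) \<longlonglongrightarrow> ip f f / 2"
    using tendsto_divide[OF tendsto_inner_self[OF sH fH lim] tendsto_const, of 2] by simp
  then show ?thesis using tendsto_diff tendsto_psi[OF s f lim] by blast
qed

lemma minimizing_sequence_Cauchy:
  assumes s: "\<And>n. s n \<in> S" and m: "\<And>t. t \<in> S \<Longrightarrow> m \<le> energy t"
    and lim: "(\<lambda>n. energy (s n)) \<longlonglongrightarrow> m"
  shows "\<forall>e>0. \<exists>N. \<forall>i\<ge>N. \<forall>j\<ge>N. sqdist (s i) (s j) < e"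
proof (intro allI impI)
  fix e :: real assume "e > 0"
  then obtain N where N: "\<And>n. n \<ge> N \<Longrightarrow> \<bar>energy (s n) - m\<bar> < e / 8"
    using LIMSEQ_D[OF lim, of "e / 8"] by auto
  have "sqdist (s i) (s j) < e" if "i \<ge> N" "j \<ge> N" for i j
  proof -
    have "sqdist (s i) (s j) \<le> 4 * (energy (s i) - m) + 4 * (energy (s j) - m)"
      by (rule sqdist_le_energy[OF s s m])
    then show ?thesis using N[OF that(1)] N[OF that(2)] by argo
  qed
  then show "\<exists>N. \<forall>i\<ge>N. \<forall>j\<ge>N. sqdist (s i) (s j) < e" by blast
qed

lemma energy_minimizer_exists: "\<exists>f\<in>S. \<forall>s\<in>S. energy f \<le> energy s"
proof -
  define m where "m = Inf (energy ` S)"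
  have bdd: "bdd_below (energy ` S)"
    using energy_lower_bound by (intro bdd_belowI2)
  have m_le: "m \<le> energy s" if "s \<in> S" for s
    unfolding m_def using cInf_lower[OF _ bdd, of "energy s"] that by simp
  have "m \<in> closure (energy ` S)"
    unfolding m_def using closure_contains_Inf[OF _ bdd] closed_subspace_zero[OF S] by blast
  then obtain y where y: "\<And>n. y n \<in> energy ` S" and y_lim: "y \<longlonglongrightarrow> m"
    unfolding closure_sequential by blast
  have "\<forall>n. \<exists>s. s \<in> S \<and> energy s = y n"
  proof
    fix n
    from y[of n] obtain t where "y n = energy t" "t \<in> S" by (rule imageE)
    then show "\<exists>s. s \<in> S \<and> energy s = y n" by auto
  qed
  from choice[OF this] obtain s where "\<forall>n. s n \<in> S \<and> energy (s n) = y n" ..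
  then have sS: "\<And>n. s n \<in> S" and s_energy: "\<And>n. energy (s n) = y n" by simp_all
  have sH: "s n \<in> H" for n using closed_subspace_subset[OF S sS] .
  have energy_lim: "(\<lambda>n. energy (s n)) \<longlonglongrightarrow> m"
    using y_lim s_energy by simp
  have "\<exists>f\<in>H. (\<lambda>n. sqdist (s n) f) \<longlonglongrightarrow> 0"
    by (rule complete[OF sH minimizing_sequence_Cauchy[OF sS m_le energy_lim]])
  then obtain f where fH: "f \<in> H" and lim: "(\<lambda>n. sqdist (s n) f) \<longlonglongrightarrow> 0" by blast
  have fS: "f \<in> S" using closed_subspace_limit[OF S sS fH lim] .
  have "energy f = m" using tendsto_energy[OF sS fS lim] energy_lim by (rule LIMSEQ_unique)
  then show ?thesis using fS m_le by auto
qed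
lemma energy_minimizer_represents:
  assumes f: "f \<in> S" and min: "\<And>s. s \<in> S \<Longrightarrow> energy f \<le> energy s"
    and h: "h \<in> S"
  shows "ip f h = psi h"
proof -
  have fH: "f \<in> H" and hH: "h \<in> H" using closed_subspace_subset[OF S] f h by auto
  have "0 \<le> t * (ip f h - psi h) + t\<^sup>2 * (ip h h / 2)" for t
  proof -
    have ftS: "(\<lambda>x. f x + t * h x) \<in> S"
      using closed_subspace_add[OF S f closed_subspace_scale[OF S h]] .
    have "ip (\<lambda>x. f x + t * h x) (\<lambda>x. f x + t * h x) = ip f f + 2 * t * ip f h + t\<^sup>2 * ip h h"
      using inner_add_scale_self[OF fH hH] .
    moreover have "psi (\<lambda>x. f x + t * h x) = psi f + t * psi h"
      using psi_add[OF f closed_subspace_scale[OF S h]] psi_scale[OF h] by simp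
    ultimately show ?thesis using min[OF ftS] by (simp add: algebra_simps)
  qed
  then have "ip f h - psi h = 0" by (rule quadratic_nonneg_imp_linear_zero)
  then show ?thesis by simp
qed

lemma riesz_representation: "\<exists>u\<in>S. \<forall>s\<in>S. ip u s = psi s"
proof -
  obtain f where "f \<in> S" and "\<And>s. s \<in> S \<Longrightarrow> energy f \<le> energy s"
    using energy_minimizer_exists by blast
  then show ?thesis by (intro bexI[of _ f] ballI energy_minimizer_represents)
qed

end

lemma exists_projection:
  assumes S: "closed_subspace S" and f: "f \<in> H"
  shows "\<exists>p\<in>S. \<forall>s\<in>S. ip p s = ip f s"
proof (rule riesz_representation[OF S])
  fix g h c assume g: "g \<in> S" and h: "h \<in> S"
  have gH: "g \<in> H" and hH: "h \<in> H" using closed_subspace_subset[OF S] g h by auto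
  show "ip f (\<lambda>x. g x + h x) = ip f g + ip f h" using inner_add_right[OF gH hH f] .
  show "ip f (\<lambda>x. c * g x) = c * ip f g" using inner_scale_right[OF gH f] .
  show "\<bar>ip f g\<bar> \<le> hnorm f * hnorm g" using abs_inner_le[OF f gH] .
qed

lemma closed_subspace_eq_if_kernel_mem:
  assumes S: "closed_subspace S" and K_S: "\<And>y. (\<lambda>x. K x y) \<in> S"
  shows "S = H"
proof
  show "S \<subseteq> H" using closed_subspace_subset[OF S] by blast
  show "H \<subseteq> S"
  proof
    fix f assume f: "f \<in> H"
    obtain p where pS: "p \<in> S" and p: "\<And>s. s \<in> S \<Longrightarrow> ip p s = ip f s"
      using exists_projection[OF S f] by blast
    have "p y = f y" for y
      using p[OF K_S] reproducing[OF closed_subspace_subset[OF S pS]] reproducing[OF f] by simp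
    then show "f \<in> S" using pS by (metis ext)
  qed
qed

lemma borel_measurable_mem:
  assumes K_meas: "\<And>y. (\<lambda>x. K x y) \<in> borel_measurable M" and f: "f \<in> H"
  shows "f \<in> borel_measurable M"
proof -
  define S where "S = {g \<in> H. g \<in> borel_measurable M}"
  have "closed_subspace S"
  proof (rule closed_subspaceI)
    fix s g assume s: "\<And>n. s n \<in> S" and g: "g \<in> H" and lim: "(\<lambda>n. sqdist (s n) g) \<longlonglongrightarrow> 0"
    have "(\<lambda>n. s n x) \<longlonglongrightarrow> g x" for x
      using tendsto_pointwise[OF _ g lim] s unfolding S_def by blast
    moreover have "s n \<in> borel_measurable M" for n
      using s unfolding S_def by blast
    ultimately have "g \<in> borel_measurable M"
      by (rule borel_measurable_LIMSEQ_metric[rotated])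
    then show "g \<in> S" using g unfolding S_def by blast
  qed (auto simp: S_def intro: zero_mem add_mem scale_mem)
  moreover have "(\<lambda>x. K x y) \<in> S" for y
    unfolding S_def using kernel_mem K_meas by blast
  ultimately have "S = H" by (rule closed_subspace_eq_if_kernel_mem)
  then show ?thesis using f unfolding S_def by blast
qed

definition is_reproducing_kernel :: "('x \<Rightarrow> real) set \<Rightarrow> ('x \<Rightarrow> 'x \<Rightarrow> real) \<Rightarrow> bool" where
  "is_reproducing_kernel S K' \<longleftrightarrow>
     (\<forall>y. (\<lambda>x. K' x y) \<in> S) \<and> (\<forall>f\<in>S. \<forall>y. f y = ip f (\<lambda>x. K' x y))"

lemma is_rkhs_closed_subspace:
  assumes S: "closed_subspace S" and K': "is_reproducing_kernel S K'"
  shows "is_rkhs S ip K'"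
proof -
  have SH: "\<And>f. f \<in> S \<Longrightarrow> f \<in> H" using closed_subspace_subset[OF S] .
  have complete_S: "\<forall>s. (\<forall>n. s n \<in> S) \<longrightarrow>
      (\<forall>e>0. \<exists>N. \<forall>m\<ge>N. \<forall>n\<ge>N. sqdist (s m) (s n) < e) \<longrightarrow>
      (\<exists>f\<in>S. (\<lambda>n. sqdist (s n) f) \<longlonglongrightarrow> 0)"
  proof (intro allI impI)
    fix s :: "nat \<Rightarrow> 'x \<Rightarrow> real"
    assume s: "\<forall>n. s n \<in> S" and "\<forall>e>0. \<exists>N. \<forall>m\<ge>N. \<forall>n\<ge>N. sqdist (s m) (s n) < e"
    then have "\<exists>f\<in>H. (\<lambda>n. sqdist (s n) f) \<longlonglongrightarrow> 0" using SH by (intro complete) auto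
    then show "\<exists>f\<in>S. (\<lambda>n. sqdist (s n) f) \<longlonglongrightarrow> 0" using closed_subspace_limit[OF S] s by blast
  qed
  have "\<forall>y. (\<lambda>x. K' x y) \<in> S" and "\<forall>f\<in>S. \<forall>y. f y = ip f (\<lambda>x. K' x y)"
    using K' unfolding is_reproducing_kernel_def by auto
  moreover have "\<forall>f\<in>S. \<forall>h\<in>S. (\<lambda>x. f x + h x) \<in> S" and "\<forall>f\<in>S. \<forall>c. (\<lambda>x. c * f x) \<in> S"
    using closed_subspace_add[OF S] closed_subspace_scale[OF S] by auto
  moreover have "\<forall>f\<in>S. \<forall>h\<in>S. ip f h = ip h f"
    and "\<forall>f\<in>S. \<forall>f'\<in>S. \<forall>h\<in>S. ip (\<lambda>x. f x + f' x) h = ip f h + ip f' h"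
    and "\<forall>f\<in>S. \<forall>h\<in>S. \<forall>c. ip (\<lambda>x. c * f x) h = c * ip f h"
    and "\<forall>f\<in>S. ip f f \<ge> 0" and "\<forall>f\<in>S. ip f f = 0 \<longrightarrow> f = (\<lambda>_. 0)"
    using SH inner_commute inner_add_left inner_scale_left inner_ge_zero inner_self_eq_zero by auto
  ultimately show ?thesis
    unfolding is_rkhs_def using closed_subspace_zero[OF S] complete_S by (intro conjI)
qed

definition orthogonal_complement :: "('x \<Rightarrow> real) set \<Rightarrow> ('x \<Rightarrow> real) set" where
  "orthogonal_complement S = {f \<in> H. \<forall>s\<in>S. ip f s = 0}"

lemma inner_orthogonal_complement:
  assumes "S \<subseteq> H" "a \<in> S" "b \<in> orthogonal_complement S"
  shows "ip a b = 0"
  using assms inner_commute[of a b] unfolding orthogonal_complement_def by auto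

lemma closed_subspace_orthogonal_complement:
  assumes SH: "S \<subseteq> H"
  shows "closed_subspace (orthogonal_complement S)"
proof (rule closed_subspaceI)
  show "orthogonal_complement S \<subseteq> H" unfolding orthogonal_complement_def by blast
  show "(\<lambda>_. 0) \<in> orthogonal_complement S"
    unfolding orthogonal_complement_def using zero_mem inner_zero_left SH by blast
next
  fix f h assume "f \<in> orthogonal_complement S" "h \<in> orthogonal_complement S"
  then show "(\<lambda>x. f x + h x) \<in> orthogonal_complement S"
    unfolding orthogonal_complement_def using add_mem inner_add_left SH by auto
next
  fix f c assume "f \<in> orthogonal_complement S"
  then show "(\<lambda>x. c * f x) \<in> orthogonal_complement S"
    unfolding orthogonal_complement_def using scale_mem inner_scale_left SH by auto
next
  fix s f assume s: "\<And>n. s n \<in> orthogonal_complement S" and f: "f \<in> H"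
    and lim: "(\<lambda>n. sqdist (s n) f) \<longlonglongrightarrow> 0"
  have sH: "s n \<in> H" for n using s unfolding orthogonal_complement_def by blast
  have "ip f g = 0" if g: "g \<in> S" for g
  proof -
    have gH: "g \<in> H" using g SH by blast
    have "ip g (s n) = 0" for n
      using s[of n] g inner_commute[OF gH sH] unfolding orthogonal_complement_def by simp
    then have "(\<lambda>n. 0) \<longlonglongrightarrow> ip g f" using tendsto_inner_right[OF gH sH f lim] by simp
    then have "ip g f = 0" by (simp add: LIMSEQ_const_iff)
    then show ?thesis using inner_commute[OF gH f] by simp
  qed
  then show "f \<in> orthogonal_complement S" using f unfolding orthogonal_complement_def by blast
qed

context
  fixes S :: "('x \<Rightarrow> real) set" and K' :: "'x \<Rightarrow> 'x \<Rightarrow> real"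
  assumes S: "closed_subspace S" and K': "is_reproducing_kernel S K'"
begin

lemma kernel_section_mem: "(\<lambda>x. K' x y) \<in> S"
  using K' unfolding is_reproducing_kernel_def by blast

lemma reproducing_subspace: "f \<in> S \<Longrightarrow> f y = ip f (\<lambda>x. K' x y)"
  using K' unfolding is_reproducing_kernel_def by blast

lemma kernel_projection:
  assumes f: "f \<in> H"
  shows "(\<lambda>x. ip f (\<lambda>z. K' z x)) \<in> S" and "\<And>s. s \<in> S \<Longrightarrow> ip (\<lambda>x. ip f (\<lambda>z. K' z x)) s = ip f s"
proof -
  obtain p where pS: "p \<in> S" and p: "\<And>s. s \<in> S \<Longrightarrow> ip p s = ip f s"
    using exists_projection[OF S f] by blast
  have "p x = ip f (\<lambda>z. K' z x)" for x
    using reproducing_subspace[OF pS] p[OF kernel_section_mem] by simp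
  then have "p = (\<lambda>x. ip f (\<lambda>z. K' z x))" by blast
  then show "(\<lambda>x. ip f (\<lambda>z. K' z x)) \<in> S" and "\<And>s. s \<in> S \<Longrightarrow> ip (\<lambda>x. ip f (\<lambda>z. K' z x)) s = ip f s"
    using pS p by auto
qed

lemma orthogonal_complement_eq_kernel:
  "orthogonal_complement S = {f \<in> H. \<forall>y. ip f (\<lambda>x. K' x y) = 0}"
proof (intro set_eqI iffI)
  fix f assume "f \<in> orthogonal_complement S"
  then show "f \<in> {f \<in> H. \<forall>y. ip f (\<lambda>x. K' x y) = 0}"
    using kernel_section_mem unfolding orthogonal_complement_def by blast
next
  fix f assume f: "f \<in> {f \<in> H. \<forall>y. ip f (\<lambda>x. K' x y) = 0}"
  then have "(\<lambda>x. ip f (\<lambda>z. K' z x)) = (\<lambda>_. 0)" by simp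
  then have "ip f s = 0" if "s \<in> S" for s
    using kernel_projection(2)[of f s] f that inner_zero_left closed_subspace_subset[OF S] by auto
  then show "f \<in> orthogonal_complement S" using f unfolding orthogonal_complement_def by blast
qed

lemma orthogonal_decomposition:
  assumes f: "f \<in> H"
  shows "\<exists>a\<in>S. \<exists>b\<in>orthogonal_complement S. f = (\<lambda>x. a x + b x)"
proof (intro bexI)
  define a where "a = (\<lambda>x. ip f (\<lambda>z. K' z x))"
  have aS: "a \<in> S" unfolding a_def using kernel_projection(1)[OF f] .
  have aH: "a \<in> H" using closed_subspace_subset[OF S aS] .
  show "a \<in> S" by (fact aS)
  have "ip (\<lambda>x. f x - a x) s = 0" if "s \<in> S" for s
    using kernel_projection(2)[OF f that] inner_diff_left[OF f aH] inner_commute[OF aH]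
      closed_subspace_subset[OF S that] unfolding a_def[symmetric] by simp
  then show "(\<lambda>x. f x - a x) \<in> orthogonal_complement S"
    using diff_mem[OF f aH] unfolding orthogonal_complement_def by blast
  show "f = (\<lambda>x. a x + (f x - a x))" by simp
qed

lemma is_rkhs_orthogonal_complement:
  "is_rkhs (orthogonal_complement S) ip (\<lambda>x y. K x y - K' x y)"
proof (rule is_rkhs_closed_subspace)
  have SH: "S \<subseteq> H" using closed_subspace_subset[OF S] by blast
  show "closed_subspace (orthogonal_complement S)"
    using closed_subspace_orthogonal_complement[OF SH] .
  have K'H: "(\<lambda>x. K' x y) \<in> H" for y using SH kernel_section_mem by blast
  have "(\<lambda>x. K x y - K' x y) \<in> orthogonal_complement S" for y
  proof -
    have "ip (\<lambda>x. K x y - K' x y) s = 0" if s: "s \<in> S" for s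
    proof -
      have sH: "s \<in> H" using s SH by blast
      have "ip (\<lambda>x. K x y - K' x y) s = ip s (\<lambda>x. K x y) - ip s (\<lambda>x. K' x y)"
        using inner_diff_left[OF kernel_mem K'H sH] inner_commute[OF sH] kernel_mem K'H by simp
      also have "\<dots> = 0" using reproducing[OF sH] reproducing_subspace[OF s] by simp
      finally show ?thesis .
    qed
    then show ?thesis using diff_mem[OF kernel_mem K'H] unfolding orthogonal_complement_def by blast
  qed
  moreover have "f y = ip f (\<lambda>x. K x y - K' x y)" if f: "f \<in> orthogonal_complement S" for f y
  proof -
    have fH: "f \<in> H" and "ip f (\<lambda>x. K' x y) = 0"
      using f kernel_section_mem unfolding orthogonal_complement_def by auto
    then show ?thesis using inner_diff_right[OF kernel_mem K'H fH] reproducing[OF fH] by simp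
  qed
  ultimately show "is_reproducing_kernel (orthogonal_complement S) (\<lambda>x y. K x y - K' x y)"
    unfolding is_reproducing_kernel_def by blast
qed

end

end

section \<open>Right invariance of Haar measure\<close>

locale haar_group =
  fixes gmul :: "'g::second_countable_topology \<Rightarrow> 'g \<Rightarrow> 'g" and gone :: 'g and ginv :: "'g \<Rightarrow> 'g"
    and L :: "'g measure"
  assumes topological_group: "topological_group gmul gone ginv"
    and haar: "haar_probability gmul L"
begin

lemma mult_assoc: "gmul (gmul a b) c = gmul a (gmul b c)"
  and mult_one_left: "gmul gone a = a" and mult_one_right: "gmul a gone = a"
  and mult_inverse_left: "gmul (ginv a) a = gone" and mult_inverse_right: "gmul a (ginv a) = gone"
  using topological_group unfolding topological_group_def by auto

lemma continuous_mult: "continuous_on UNIV (\<lambda>(a, b). gmul a b)"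
  and continuous_inverse: "continuous_on UNIV ginv"
  using topological_group unfolding topological_group_def by auto

lemma prob_space_L: "prob_space L" and sets_L: "sets L = sets borel"
  and emeasure_mult_left_image: "A \<in> sets borel \<Longrightarrow> emeasure L (gmul a ` A) = emeasure L A"
  using haar unfolding haar_probability_def by auto

sublocale prob_space L by (fact prob_space_L)

lemma space_L: "space L = UNIV"
  using sets_eq_imp_space_eq[OF sets_L] by simp

lemma inverse_unique:
  assumes "gmul x y = gone"
  shows "x = ginv y"
proof -
  have "x = gmul x (gmul y (ginv y))" by (simp add: mult_inverse_right mult_one_right)
  also have "\<dots> = ginv y" using assms by (simp add: mult_assoc[symmetric] mult_one_left)
  finally show ?thesis .
qed

lemma inverse_inverse: "ginv (ginv a) = a"
  using inverse_unique[of a "ginv a"] mult_inverse_right by simp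

lemma inverse_mult: "ginv (gmul a b) = gmul (ginv b) (ginv a)"
proof -
  have "gmul (gmul (ginv b) (ginv a)) (gmul a b) = gmul (ginv b) (gmul (gmul (ginv a) a) b)"
    by (simp add: mult_assoc)
  also have "\<dots> = gone" by (simp add: mult_inverse_left mult_one_left)
  finally show ?thesis by (rule inverse_unique[symmetric])
qed

lemma measurable_mult: "(\<lambda>(a, b). gmul a b) \<in> measurable (borel \<Otimes>\<^sub>M borel) borel"
  using borel_measurable_continuous_onI[OF continuous_mult] unfolding borel_prod .

lemma measurable_mult_left: "gmul a \<in> measurable L L"
proof -
  have "gmul a \<in> measurable borel borel"
    using measurable_compose[OF measurable_Pair[OF measurable_const measurable_ident_sets[OF refl]]
        measurable_mult] by simp
  then show ?thesis using measurable_cong_sets[OF sets_L sets_L] by blast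
qed

lemma measurable_mult_right: "(\<lambda>b. gmul b a) \<in> measurable L L"
proof -
  have "(\<lambda>b. gmul b a) \<in> measurable borel borel"
    using measurable_compose[OF measurable_Pair[OF measurable_ident_sets[OF refl] measurable_const]
        measurable_mult] by simp
  then show ?thesis using measurable_cong_sets[OF sets_L sets_L] by blast
qed

lemma measurable_inverse: "ginv \<in> measurable L L"
  using borel_measurable_continuous_onI[OF continuous_inverse]
    measurable_cong_sets[OF sets_L sets_L]
  by blast

lemma distr_mult_left: "distr L L (gmul a) = L"
proof (rule measure_eqI)
  fix A assume A: "A \<in> sets (distr L L (gmul a))"
  have "gmul a -` A \<inter> space L = gmul (ginv a) ` A"
  proof (intro set_eqI iffI)
    fix x assume "x \<in> gmul a -` A \<inter> space L"
    moreover have "x = gmul (ginv a) (gmul a x)"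
      by (simp add: mult_assoc[symmetric] mult_inverse_left mult_one_left)
    ultimately show "x \<in> gmul (ginv a) ` A" by blast
  next
    fix x assume "x \<in> gmul (ginv a) ` A"
    then show "x \<in> gmul a -` A \<inter> space L"
      by (auto simp: space_L mult_assoc[symmetric] mult_inverse_right mult_one_left)
  qed
  then show "emeasure (distr L L (gmul a)) A = emeasure L A"
    using A emeasure_distr[OF measurable_mult_left] emeasure_mult_left_image sets_L by simp
qed simp

text \<open>Fubini's theorem applied to \<open>(g, h) \<mapsto> 1\<^sub>A(h g)\<close>: integrating first over \<open>g\<close> with the
  left-invariant \<open>L\<close> gives \<open>L A\<close>, first over \<open>h\<close> with the right-invariant \<open>N\<close> gives \<open>N A\<close>.\<close>
lemma eq_if_right_invariant:
  assumes N: "prob_space N" and sets_N: "sets N = sets L"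
    and N_inv: "\<And>a. distr N L (\<lambda>g. gmul g a) = N"
  shows "L = N"
proof (rule measure_eqI)
  show "sets L = sets N" using sets_N by simp
  fix A assume A: "A \<in> sets L"
  interpret N: prob_space N by (fact N)
  interpret pair_sigma_finite L N
    unfolding pair_sigma_finite_def using N prob_space_imp_sigma_finite prob_space_L by blast
  have mult_swap: "(\<lambda>p. gmul (snd p) (fst p)) \<in> measurable (L \<Otimes>\<^sub>M N) L"
    using measurable_compose[OF measurable_Pair[OF measurable_snd measurable_fst] measurable_mult]
      measurable_cong_sets[OF sets_pair_measure_cong[OF sets_L trans[OF sets_N sets_L]] sets_L]
    by simp
  have L_eq: "emeasure L A = (\<integral>\<^sup>+ g. indicator A (gmul h g) \<partial>L)" for h
    using nn_integral_distr[OF measurable_mult_left, of "indicator A" h] A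
    unfolding distr_mult_left by simp
  have N_eq: "emeasure N A = (\<integral>\<^sup>+ h. indicator A (gmul h g) \<partial>N)" for g
    using nn_integral_distr[of "\<lambda>h. gmul h g" N L "indicator A"] A measurable_mult_right sets_N
    unfolding N_inv by (simp add: measurable_cong_sets[OF sets_N refl])
  have "emeasure L A = (\<integral>\<^sup>+ h. emeasure L A \<partial>N)"
    using N.emeasure_space_1 by simp
  also have "\<dots> = (\<integral>\<^sup>+ h. (\<integral>\<^sup>+ g. indicator A (gmul h g) \<partial>L) \<partial>N)"
    by (rule nn_integral_cong) (rule L_eq)
  also have "\<dots> = (\<integral>\<^sup>+ g. (\<integral>\<^sup>+ h. indicator A (gmul h g) \<partial>N) \<partial>L)"
    using Fubini[OF measurable_compose[OF mult_swap borel_measurable_indicator[OF A]]] by simp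
  also have "\<dots> = (\<integral>\<^sup>+ g. emeasure N A \<partial>L)"
    by (rule nn_integral_cong) (rule N_eq[symmetric])
  also have "\<dots> = emeasure N A"
    using emeasure_space_1 by simp
  finally show "emeasure L A = emeasure N A" .
qed

lemma distr_mult_right: "distr L L (\<lambda>g. gmul g a) = L"
proof -
  define N where "N = distr L L ginv"
  have N_inv: "distr N L (\<lambda>g. gmul g b) = N" for b
  proof -
    have "distr N L (\<lambda>g. gmul g b) = distr L L ((\<lambda>g. gmul g b) \<circ> ginv)"
      unfolding N_def by (rule distr_distr[OF measurable_mult_right measurable_inverse])
    also have "(\<lambda>g. gmul g b) \<circ> ginv = ginv \<circ> gmul (ginv b)"
      by (auto simp: inverse_mult inverse_inverse)
    also have "distr L L (ginv \<circ> gmul (ginv b)) = distr (distr L L (gmul (ginv b))) L ginv"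
      by (rule distr_distr[OF measurable_inverse measurable_mult_left, symmetric])
    finally show ?thesis unfolding distr_mult_left N_def .
  qed
  have "L = N"
    by (rule eq_if_right_invariant[OF _ _ N_inv])
      (simp_all add: N_def prob_space_distr measurable_inverse)
  then show ?thesis using N_inv by simp
qed

lemma integral_mult_right:
  fixes F :: "'g \<Rightarrow> real"
  assumes "F \<in> borel_measurable L"
  shows "(\<integral>g. F (gmul g a) \<partial>L) = (\<integral>g. F g \<partial>L)"
  using integral_distr[OF measurable_mult_right assms, of a] unfolding distr_mult_right by simp

end

section \<open>Averaging over the group action\<close>

locale invariant_kernel_rkhs = rkhs H ip k + haar_group gmul gone ginv L
  for H :: "('x::topological_space \<Rightarrow> real) set" and ip and k
    and gmul :: "'g::second_countable_topology \<Rightarrow> 'g \<Rightarrow> 'g" and gone ginv L +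
  fixes act :: "'g \<Rightarrow> 'x \<Rightarrow> 'x"
  assumes action: "measurable_action gmul gone act"
    and kernel_measurable: "\<And>y. (\<lambda>x. k x y) \<in> borel_measurable borel"
    and kernel_bounded: "\<exists>B. \<forall>x. k x x \<le> B"
    and kernel_average_sym: "\<And>x x'. (\<integral>g. k (act g x) x' \<partial>L) = (\<integral>g. k x (act g x') \<partial>L)"
begin

lemma act_mult: "act (gmul g h) x = act g (act h x)"
  using action unfolding measurable_action_def by simp

lemma measurable_orbit: "(\<lambda>g. act g x) \<in> measurable L borel"
proof -
  have "(\<lambda>(g, x). act g x) \<in> measurable (borel \<Otimes>\<^sub>M borel) borel"
    using action unfolding measurable_action_def by simp
  then have "(\<lambda>g. act g x) \<in> measurable borel borel"
    using measurable_compose[OF measurable_Pair[OF measurable_ident_sets[OF refl] measurable_const]]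
    by simp
  then show ?thesis using measurable_cong_sets[OF sets_L refl] by blast
qed

lemma measurable_orbit_mem: "f \<in> H \<Longrightarrow> (\<lambda>g. f (act g x)) \<in> borel_measurable L"
  using measurable_compose[OF measurable_orbit borel_measurable_mem[OF kernel_measurable]] .

lemma integrable_orbit: "f \<in> H \<Longrightarrow> integrable L (\<lambda>g. f (act g x))"
proof -
  assume f: "f \<in> H"
  obtain B where B: "\<And>x. k x x \<le> B" using kernel_bounded by blast
  show ?thesis
    by (rule integrable_const_bound[where B = "hnorm f * sqrt B"])
      (simp_all add: abs_le_hnorm_bound[OF B f] measurable_orbit_mem[OF f])
qed

lemma orbit_avg_bounded:
  obtains C where "\<And>f x. f \<in> H \<Longrightarrow> \<bar>orbit_avg L act f x\<bar> \<le> C * hnorm f"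
proof -
  obtain B where B: "\<And>x. k x x \<le> B" using kernel_bounded by blast
  have "\<bar>orbit_avg L act f x\<bar> \<le> sqrt B * hnorm f" if f: "f \<in> H" for f x
  proof -
    have "\<bar>orbit_avg L act f x\<bar> \<le> (\<integral>g. \<bar>f (act g x)\<bar> \<partial>L)"
      unfolding orbit_avg_def by (rule integral_abs_bound)
    also have "\<dots> \<le> hnorm f * sqrt B"
      by (rule integral_le_const)
        (simp_all add: integrable_abs[OF integrable_orbit[OF f]] abs_le_hnorm_bound[OF B f])
    finally show ?thesis by (simp add: mult.commute)
  qed
  then show ?thesis by (rule that)
qed

definition avg_kernel :: "'x \<Rightarrow> 'x \<Rightarrow> real" where
  "avg_kernel x y = (\<integral>g. k x (act g y) \<partial>L)"

lemma
  shows avg_kernel_mem: "(\<lambda>x. avg_kernel x y) \<in> H"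
    and inner_avg_kernel: "f \<in> H \<Longrightarrow> ip f (\<lambda>x. avg_kernel x y) = orbit_avg L act f y"
proof -
  obtain C where C: "\<And>f x. f \<in> H \<Longrightarrow> \<bar>orbit_avg L act f x\<bar> \<le> C * hnorm f"
    using orbit_avg_bounded by blast
  have "\<exists>u\<in>H. \<forall>s\<in>H. ip u s = orbit_avg L act s y"
  proof (rule riesz_representation[OF closed_subspace_H])
    fix f h assume "f \<in> H" "h \<in> H"
    then show "orbit_avg L act (\<lambda>x. f x + h x) y = orbit_avg L act f y + orbit_avg L act h y"
      unfolding orbit_avg_def using integrable_orbit by simp
  next
    fix f c
    show "orbit_avg L act (\<lambda>x. c * f x) y = c * orbit_avg L act f y"
      unfolding orbit_avg_def by simp
  next
    fix f assume "f \<in> H"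
    then show "\<bar>orbit_avg L act f y\<bar> \<le> C * hnorm f" by (rule C)
  qed
  then obtain u where uH: "u \<in> H" and u: "\<And>s. s \<in> H \<Longrightarrow> ip u s = orbit_avg L act s y"
    by blast
  have "u x = avg_kernel x y" for x
  proof -
    have "u x = orbit_avg L act (\<lambda>z. k z x) y"
      using reproducing[OF uH, of x] u[OF kernel_mem] by simp
    also have "\<dots> = avg_kernel x y"
      unfolding orbit_avg_def avg_kernel_def by (simp add: kernel_sym[of _ x])
    finally show ?thesis .
  qed
  then have u_eq: "u = (\<lambda>x. avg_kernel x y)" by blast
  then show "(\<lambda>x. avg_kernel x y) \<in> H" using uH by simp
  show "ip f (\<lambda>x. avg_kernel x y) = orbit_avg L act f y" if "f \<in> H"
    using u[OF that] inner_commute[OF that uH] u_eq by simp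
qed

lemma avg_kernel_sym: "avg_kernel x y = avg_kernel y x"
proof -
  have "avg_kernel x y = (\<integral>g. k (act g y) x \<partial>L)"
    unfolding avg_kernel_def by (simp add: kernel_sym[of x])
  also have "\<dots> = avg_kernel y x"
    unfolding avg_kernel_def by (rule kernel_average_sym)
  finally show ?thesis .
qed

lemma avg_kernel_invariant: "G_invariant act (\<lambda>x. avg_kernel x y)"
  unfolding G_invariant_def
proof (intro allI)
  fix h z
  have meas: "(\<lambda>g. k y (act g z)) \<in> borel_measurable L"
    using measurable_orbit_mem[OF kernel_mem, of z y] by (simp add: kernel_sym[of y])
  have "avg_kernel (act h z) y = avg_kernel y (act h z)" by (rule avg_kernel_sym)
  also have "\<dots> = (\<integral>g. k y (act (gmul g h) z) \<partial>L)"
    unfolding avg_kernel_def by (simp add: act_mult)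
  also have "\<dots> = (\<integral>g. k y (act g z) \<partial>L)"
    using integral_mult_right[OF meas] .
  also have "\<dots> = avg_kernel y z" unfolding avg_kernel_def ..
  also have "\<dots> = avg_kernel z y" by (rule avg_kernel_sym)
  finally show "avg_kernel (act h z) y = avg_kernel z y" .
qed

definition invariant_subspace :: "('x \<Rightarrow> real) set" where
  "invariant_subspace = {f \<in> H. G_invariant act f}"

lemma closed_subspace_invariant: "closed_subspace invariant_subspace"
proof (rule closed_subspaceI)
  show "invariant_subspace \<subseteq> H" unfolding invariant_subspace_def by blast
  show "(\<lambda>_. 0) \<in> invariant_subspace"
    unfolding invariant_subspace_def G_invariant_def using zero_mem by simp
next
  fix f h assume "f \<in> invariant_subspace" "h \<in> invariant_subspace"
  then show "(\<lambda>x. f x + h x) \<in> invariant_subspace"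
    unfolding invariant_subspace_def G_invariant_def using add_mem by simp
next
  fix f c assume "f \<in> invariant_subspace"
  then show "(\<lambda>x. c * f x) \<in> invariant_subspace"
    unfolding invariant_subspace_def G_invariant_def using scale_mem by simp
next
  fix s f assume s: "\<And>n. s n \<in> invariant_subspace" and f: "f \<in> H"
    and lim: "(\<lambda>n. sqdist (s n) f) \<longlonglongrightarrow> 0"
  have sH: "s n \<in> H" for n using s unfolding invariant_subspace_def by blast
  have "f (act g x) = f x" for g x
  proof -
    have "(\<lambda>n. s n (act g x)) = (\<lambda>n. s n x)"
      using s unfolding invariant_subspace_def G_invariant_def by simp
    then have "(\<lambda>n. s n x) \<longlonglongrightarrow> f (act g x)"
      using tendsto_pointwise[OF sH f lim, of "act g x"] by simp
    then show ?thesis using tendsto_pointwise[OF sH f lim, of x] by (rule LIMSEQ_unique)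
  qed
  then show "f \<in> invariant_subspace"
    using f unfolding invariant_subspace_def G_invariant_def by blast
qed

lemma orbit_avg_invariant: "G_invariant act f \<Longrightarrow> orbit_avg L act f = f"
  unfolding G_invariant_def orbit_avg_def by (simp add: prob_space)

lemma is_reproducing_kernel_avg_kernel: "is_reproducing_kernel invariant_subspace avg_kernel"
  unfolding is_reproducing_kernel_def
proof (intro conjI allI ballI)
  show "(\<lambda>x. avg_kernel x y) \<in> invariant_subspace" for y
    unfolding invariant_subspace_def using avg_kernel_mem avg_kernel_invariant by blast
  fix f y assume f: "f \<in> invariant_subspace"
  then have "f \<in> H" and "G_invariant act f" unfolding invariant_subspace_def by auto
  then show "f y = ip f (\<lambda>x. avg_kernel x y)"
    using inner_avg_kernel orbit_avg_invariant by simp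
qed

lemma orbit_avg_eq_kernel_projection: "f \<in> H \<Longrightarrow> orbit_avg L act f = (\<lambda>y. ip f (\<lambda>x. avg_kernel x y))"
  using inner_avg_kernel by simp

end

theorem theorem5p14:
  fixes gmul :: "'g::{second_countable_topology, t2_space} \<Rightarrow> 'g \<Rightarrow> 'g"
    and gone :: 'g and ginv :: "'g \<Rightarrow> 'g"
    and L :: "'g measure"
    and act :: "'g \<Rightarrow> 'x::polish_space \<Rightarrow> 'x"
    and \<mu> :: "'x measure"
    and k :: "'x \<Rightarrow> 'x \<Rightarrow> real"
    and H :: "('x \<Rightarrow> real) set"
    and ip :: "('x \<Rightarrow> real) \<Rightarrow> ('x \<Rightarrow> real) \<Rightarrow> real"
  assumes grp: "topological_group gmul gone ginv"
    and cpt: "compact (UNIV :: 'g set)"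
    and haar: "haar_probability gmul L"
    and act: "measurable_action gmul gone act"
    and mu_prob: "prob_space \<mu>" and mu_sets: "sets \<mu> = sets borel"
    and mu_inv: "\<forall>g. \<forall>A \<in> sets borel. emeasure \<mu> (act g -` A) = emeasure \<mu> A"
    and mu_supp: "support \<mu> = UNIV"
    and k_meas: "(\<lambda>(x, y). k x y) \<in> borel_measurable (borel \<Otimes>\<^sub>M borel)"
    and k_pd: "pd_kernel k"
    and k_cont: "\<forall>x. continuous_on UNIV (\<lambda>y. k y x)"
    and k_bdd: "\<exists>B. \<forall>x. k x x \<le> B"
    and rkhs: "is_rkhs H ip k"
    and k_sym_int: "\<forall>x x'. (\<integral>g. k (act g x) x' \<partial>L) = (\<integral>g. k x (act g x') \<partial>L)"
  defines "Hbar \<equiv> {f \<in> H. G_invariant act f}"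
    and "Hperp \<equiv> {f \<in> H. orbit_avg L act f = (\<lambda>_. 0)}"
    and "kbar \<equiv> (\<lambda>x y. \<integral>g. k x (act g y) \<partial>L)"
    and "kperp \<equiv> (\<lambda>x y. k x y - (\<integral>g. k x (act g y) \<partial>L))"
  shows "(\<forall>f\<in>H. orbit_avg L act f \<in> H)
       \<and> (\<forall>f\<in>H. \<exists>a\<in>Hbar. \<exists>b\<in>Hperp. f = (\<lambda>x. a x + b x))
       \<and> (\<forall>a\<in>Hbar. \<forall>b\<in>Hperp. ip a b = 0)
       \<and> is_rkhs Hbar ip kbar
       \<and> is_rkhs Hperp ip kperp"
proof -
  interpret invariant_kernel_rkhs H ip k gmul gone ginv L act
  proof unfold_locales
    show "is_rkhs H ip k" by (fact rkhs)
    show "topological_group gmul gone ginv" by (fact grp)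
    show "haar_probability gmul L" by (fact haar)
    show "measurable_action gmul gone act" by (fact act)
    show "(\<lambda>x. k x y) \<in> borel_measurable borel" for y
      using k_cont by (intro borel_measurable_continuous_onI) blast
    show "\<exists>B. \<forall>x. k x x \<le> B" by (fact k_bdd)
    show "(\<integral>g. k (act g x) x' \<partial>L) = (\<integral>g. k x (act g x') \<partial>L)" for x x'
      using k_sym_int by blast
  qed
  note S = closed_subspace_invariant is_reproducing_kernel_avg_kernel
  have SH: "invariant_subspace \<subseteq> H" using closed_subspace_subset[OF S(1)] by blast
  have "Hbar = invariant_subspace" unfolding Hbar_def invariant_subspace_def ..
  moreover have "Hperp = orthogonal_complement invariant_subspace"
    unfolding Hperp_def orthogonal_complement_eq_kernel[OF S]
    using orbit_avg_eq_kernel_projection by (auto simp: fun_eq_iff)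
  moreover have "kbar = avg_kernel" and "kperp = (\<lambda>x y. k x y - avg_kernel x y)"
    unfolding kbar_def kperp_def avg_kernel_def by simp_all
  moreover have "orbit_avg L act f \<in> H" if "f \<in> H" for f
    using kernel_projection(1)[OF S that] orbit_avg_eq_kernel_projection[OF that] SH by auto
  ultimately show ?thesis
    using orthogonal_decomposition[OF S] inner_orthogonal_complement[OF SH]
      is_rkhs_closed_subspace[OF S] is_rkhs_orthogonal_complement[OF S]
    by blast
qed

end
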